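(* With the notation below, let $f,g\in\mathcal K(C_p)$ be real-valued. (i) $\|f\vee g\|_p\leq\max\{\|f\|_p,\|g\|_p\}$. (ii) $\|f+g\|_p\leq\max\{\|f\|_p,\|g\|_p\}$. (iii) $\|p^af\|_p=p^{-a}\|f\|_p$ for $a\in\mathbb{Z}$. (iv) $\|f\|_p\leq1$ if and only if the restriction of $f$ to $[1,p]$ has integral slopes. (v) For $D\in\mathrm{Div}(C_p)$, the sets $H^0(D)^\rho=\{f\in H^0(D)\mid\|f\|_p\leq\rho\}$ ($\rho>0$) form an increasing filtration of $H^0(D)$ by $\mathbb{R}_{\max}$-submodules.
   Context: Let $p$ be a prime, $H_p=\mathbb{Z}[1/p]$, $|\cdot|_p$ the $p$-adic absolute value on $H_p$ normalized by $|p|_p=1/p$. $C_p$ is the set of subgroups $H=\lambda H_p\subset\mathbb{R}$, $\lambda>0$. $\mathcal K(C_p)$: continuous piecewise affine $f:(0,\infty)\to\mathbb{R}$ with slopes in $H_p$ and $f(p\lambda)=f(\lambda)$, plus the constant $-\infty$; it is a semifield for $\vee=\max$ and $+$, and an $\mathbb{R}_{\max}$-module ($\mathbb{R}_{\max}=\mathbb{R}\cup\{-\infty\}$ with operations max and $+$) via $\vee$ and addition of constants. For real-valued $f$, $\|f\|_p=\max\{|h|_p/\lambda\}$ over $\lambda\in(0,\infty)$ and $h$ ranging over the left and right slopes of $f$ at $\lambda$. Divisors: maps $D$ with $D(H)\in H$ for $H\in C_p$, zero for all but finitely many $H$, ordered pointwise; principal divisor $(f)(H)=h_+-h_-$ for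 $H=\lambda H_p$, with $h_\pm=\lim_{\epsilon\to0\pm}(f((1+\epsilon)\lambda)-f(\lambda))/\epsilon$. $H^0(D)=\{f\in\mathcal K(C_p)\text{ real-valued}\mid D+(f)\geq0\}\cup\{-\infty\}$, the element $-\infty$ being included in every $H^0(D)^\rho$. *)

theory Defs
  imports "HOL-Analysis.Analysis"
begin

definition Hp :: "nat \<Rightarrow> real set" where
  "Hp p = {x. \<exists>m::int. \<exists>k::nat. x = of_int m / real p ^ k}"

definition padic_abs :: "nat \<Rightarrow> real \<Rightarrow> real" where
  "padic_abs p x = (if x = 0 then 0 else
     real p powi (- (THE v::int. \<exists>m::int. \<not> int p dvd m \<and> x = of_int m * real p powi v)))"

text \<open>Values at non-positive arguments are irrelevant.\<close>
definition K_real :: "nat \<Rightarrow> (real \<Rightarrow> real) \<Rightarrow> bool" where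
  "K_real p f \<longleftrightarrow>
     continuous_on {0<..} f \<and>
     (\<forall>x>0. f (real p * x) = f x) \<and>
     (\<forall>a b. 0 < a \<longrightarrow> a < b \<longrightarrow>
        (\<exists>S::real set. finite S \<and> a \<in> S \<and> b \<in> S \<and> S \<subseteq> {a..b} \<and>
           (\<forall>u\<in>S. \<forall>v\<in>S. u < v \<longrightarrow> {u<..<v} \<inter> S = {} \<longrightarrow>
              (\<exists>s\<in>Hp p. \<exists>c. \<forall>t\<in>{u..v}. f t = s * t + c))))"

definition slopes :: "(real \<Rightarrow> real) \<Rightarrow> real \<Rightarrow> real set" where
  "slopes f x = {h. (f has_real_derivative h) (at_left x) \<or> (f has_real_derivative h) (at_right x)}"

definition left_slopes :: "(real \<Rightarrow> real) \<Rightarrow> real \<Rightarrow> real set" where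
  "left_slopes f x = {h. (f has_real_derivative h) (at_left x)}"

definition right_slopes :: "(real \<Rightarrow> real) \<Rightarrow> real \<Rightarrow> real set" where
  "right_slopes f x = {h. (f has_real_derivative h) (at_right x)}"

definition pnorm :: "nat \<Rightarrow> (real \<Rightarrow> real) \<Rightarrow> real" where
  "pnorm p f = Sup {padic_abs p h / x | x h. 0 < x \<and> h \<in> slopes f x}"

definition Cp :: "nat \<Rightarrow> real set set" where
  "Cp p = {(\<lambda>y. l * y) ` Hp p | l. 0 < l}"

definition Div :: "nat \<Rightarrow> (real set \<Rightarrow> real) set" where
  "Div p = {D. (\<forall>H\<in>Cp p. D H \<in> H) \<and> finite {H\<in>Cp p. D H \<noteq> 0} \<and> (\<forall>H. H \<notin> Cp p \<longrightarrow> D H = 0)}"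

definition hplus :: "(real \<Rightarrow> real) \<Rightarrow> real \<Rightarrow> real" where
  "hplus f l = Lim (at_right 0) (\<lambda>e. (f ((1 + e) * l) - f l) / e)"

definition hminus :: "(real \<Rightarrow> real) \<Rightarrow> real \<Rightarrow> real" where
  "hminus f l = Lim (at_left 0) (\<lambda>e. (f ((1 + e) * l) - f l) / e)"

definition pdiv :: "nat \<Rightarrow> (real \<Rightarrow> real) \<Rightarrow> real set \<Rightarrow> real" where
  "pdiv p f H = (if H \<in> Cp p then
      (let l = (SOME l. 0 < l \<and> H = (\<lambda>y. l * y) ` Hp p) in hplus f l - hminus f l)
    else 0)"

text \<open>Elements of K(C_p): None stands for the constant -oo, Some f for a real-valued f.
  R_max = real option, None = -oo.\<close>
type_synonym Kelem = "(real \<Rightarrow> real) option"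

fun Ksup :: "Kelem \<Rightarrow> Kelem \<Rightarrow> Kelem" where
  "Ksup None y = y"
| "Ksup x None = x"
| "Ksup (Some f) (Some g) = Some (\<lambda>x. max (f x) (g x))"

fun Ksmult :: "real option \<Rightarrow> Kelem \<Rightarrow> Kelem" where
  "Ksmult None _ = None"
| "Ksmult _ None = None"
| "Ksmult (Some c) (Some f) = Some (\<lambda>x. f x + c)"

definition H0 :: "nat \<Rightarrow> (real set \<Rightarrow> real) \<Rightarrow> Kelem set" where
  "H0 p D = insert None {Some f | f. K_real p f \<and> (\<forall>H\<in>Cp p. D H + pdiv p f H \<ge> 0)}"

definition H0rho :: "nat \<Rightarrow> (real set \<Rightarrow> real) \<Rightarrow> real \<Rightarrow> Kelem set" where
  "H0rho p D \<rho> = {x \<in> H0 p D. case x of None \<Rightarrow> True | Some f \<Rightarrow> pnorm p f \<le> \<rho>}"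

definition Rmax_submodule :: "Kelem set \<Rightarrow> bool" where
  "Rmax_submodule M \<longleftrightarrow> None \<in> M \<and> (\<forall>x\<in>M. \<forall>y\<in>M. Ksup x y \<in> M) \<and>
     (\<forall>c. \<forall>x\<in>M. Ksmult c x \<in> M)"

end

(*
  Near every point a real-valued f in K(C_p) is affine on each side, with slopes in Z[1/p].
  Since f(p x) = f(x), a slope h at x becomes the slope h / p^k at p^k x, and |h|_p / x does not
  change; so ||f||_p is attained on [1, p], where there are only finitely many slopes.
  The slopes of f \<or> g are slopes of f or of g, the slopes of f + g are sums of slopes of f and g
  (so the ultrametric inequality applies), and those of p^a f are p^a times those of f; this gives
  (i)-(iii). For (iv), a slope h at 1 \<le> x < p with |h|_p / x \<le> 1 has |h|_p < p, and a power of p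
  below p is at most 1.
  For (v), f \<or> g touches the larger of f and g from above at every point, which can only raise the
  right slope and lower the left one, hence (f \<or> g) \<ge> min ((f), (g)); adding a constant changes
  neither the divisor nor the slopes.
*)
theory Submission
  imports Defs
begin

section \<open>The p-adic absolute value on \<open>\<int>[1/p]\<close>\<close>

lemma prime_real_gt_1: "prime p \<Longrightarrow> real p > 1"
  using prime_gt_1_nat by simp

lemma power_int_le_power_int_iff:
  fixes a :: "'a :: linordered_field"
  assumes "1 < a"
  shows "power_int a m \<le> power_int a n \<longleftrightarrow> m \<le> n"
  using assms power_int_increasing[of m n a] power_int_strict_increasing[of n m a]
  by (cases "m \<le> n") auto

lemma int_prime_power_decomposition:
  assumes "prime p" "n \<noteq> (0::int)"
  obtains j m where "\<not> int p dvd m" "n = int p ^ j * m"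
proof -
  have "\<not> is_unit (int p)"
    using prime_gt_1_nat[OF assms(1)] by auto
  then show ?thesis
    using multiplicity_decompose'[OF assms(2)] that by blast
qed

lemma of_int_mult_power_int_in_Hp: "of_int n * real p powi v \<in> Hp p"
proof (cases "v \<ge> 0")
  case True
  then have "of_int n * real p powi v = of_int (n * int p ^ nat v) / real p ^ 0"
    by (simp add: power_int_def)
  then show ?thesis unfolding Hp_def by blast
next
  case False
  then have "of_int n * real p powi v = of_int n / real p ^ nat (- v)"
    by (simp add: power_int_def divide_inverse power_inverse)
  then show ?thesis unfolding Hp_def by blast
qed

lemma Hp_normal_form:
  assumes "prime p" "x \<in> Hp p" "x \<noteq> 0"
  obtains m v where "\<not> int p dvd m" "x = of_int m * real p powi v"
proof -
  obtain n and k :: nat where x: "x = of_int n / real p ^ k"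
    using assms(2) by (auto simp: Hp_def)
  then have "n \<noteq> 0" using assms(3) by auto
  then obtain j m where m: "\<not> int p dvd m" "n = int p ^ j * m"
    using int_prime_power_decomposition[OF assms(1)] by blast
  have "x = of_int m * real p powi (int j - int k)"
    using prime_real_gt_1[OF assms(1)] by (simp add: x m power_int_diff)
  with m(1) that show ?thesis by blast
qed

lemma normal_form_exponent_unique:
  assumes "prime p" "\<not> int p dvd m" "\<not> int p dvd m'"
    and "of_int m * real p powi v = of_int m' * real p powi v'"
  shows "v = v'"
  using assms(2-)
proof (induction v v' arbitrary: m m' rule: linorder_wlog)
  case (le v v')
  then obtain d where d: "v' = v + int d"
    using zle_iff_zadd by blast
  then have "real_of_int m = real_of_int (m' * int p ^ d)"
    using le.prems(3) prime_real_gt_1[OF assms(1)] by (simp add: power_int_add)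
  then have "m = m' * int p ^ d"
    by (simp only: of_int_eq_iff)
  then have "d = 0"
    using le.prems(1) by (cases d) auto
  then show ?case
    using d by simp
qed (metis eq_commute)

lemma padic_abs_normal_form:
  assumes "prime p" "\<not> int p dvd m"
  shows "padic_abs p (of_int m * real p powi v) = real p powi (- v)"
proof -
  have "(THE w. \<exists>m'. \<not> int p dvd m' \<and> of_int m * real p powi v = of_int m' * real p powi w) = v"
    using assms normal_form_exponent_unique[OF assms] by (intro the_equality) auto
  moreover have "of_int m * real p powi v \<noteq> 0"
    using assms(2) prime_real_gt_1[OF assms(1)] by (cases "m = 0") auto
  ultimately show ?thesis
    unfolding padic_abs_def by simp
qed

lemma padic_abs_nonneg: "prime p \<Longrightarrow> 0 \<le> padic_abs p x"
  using prime_real_gt_1[of p] unfolding padic_abs_def by auto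

lemma padic_abs_Hp_cases:
  assumes "prime p" "x \<in> Hp p"
  shows "x = 0 \<or> (\<exists>v. padic_abs p x = real p powi (- v))"
  using Hp_normal_form[OF assms] padic_abs_normal_form[OF assms(1)] by metis

lemma padic_abs_le_power_int_iff:
  assumes p: "prime p" and x: "x \<in> Hp p"
  shows "padic_abs p x \<le> real p powi (- v) \<longleftrightarrow> (\<exists>n::int. x = of_int n * real p powi v)"
proof
  assume le: "padic_abs p x \<le> real p powi (- v)"
  show "\<exists>n::int. x = of_int n * real p powi v"
  proof (cases "x = 0")
    case False
    then obtain m w where m: "\<not> int p dvd m" "x = of_int m * real p powi w"
      using Hp_normal_form[OF p x] by blast
    then have "real p powi (- w) \<le> real p powi (- v)"
      using le padic_abs_normal_form[OF p] by simp
    then have "v \<le> w"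
      using power_int_le_power_int_iff[OF prime_real_gt_1[OF p]] by simp
    then obtain d where "w = v + int d"
      using zle_iff_zadd by blast
    then have "x = of_int (m * int p ^ d) * real p powi v"
      using m(2) prime_real_gt_1[OF p] by (simp add: power_int_add)
    then show ?thesis ..
  qed simp
next
  assume "\<exists>n::int. x = of_int n * real p powi v"
  then obtain n where x: "x = of_int n * real p powi v" ..
  show "padic_abs p x \<le> real p powi (- v)"
  proof (cases "n = 0")
    case False
    then obtain j m where m: "\<not> int p dvd m" "n = int p ^ j * m"
      using int_prime_power_decomposition[OF p] by blast
    then have "x = of_int m * real p powi (v + int j)"
      using x prime_real_gt_1[OF p] by (simp add: power_int_add)
    then have "padic_abs p x = real p powi (- v - int j)"
      using padic_abs_normal_form[OF p m(1)] by simp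
    also have "\<dots> \<le> real p powi (- v)"
      using power_int_le_power_int_iff[OF prime_real_gt_1[OF p]] by simp
    finally show ?thesis .
  qed (use x prime_real_gt_1[OF p] in \<open>simp add: padic_abs_def\<close>)
qed

lemma padic_abs_ultrametric:
  assumes p: "prime p" and "a \<in> Hp p" "b \<in> Hp p"
  shows "padic_abs p (a + b) \<le> max (padic_abs p a) (padic_abs p b)"
proof -
  have "padic_abs p (a + b) \<le> padic_abs p b"
    if a: "a \<in> Hp p" and b: "b \<in> Hp p" and le: "padic_abs p a \<le> padic_abs p b" and "b \<noteq> 0"
    for a b
  proof -
    obtain v where v: "padic_abs p b = real p powi (- v)"
      using padic_abs_Hp_cases[OF p b] \<open>b \<noteq> 0\<close> by blast
    obtain n1 n2 :: int where "a = of_int n1 * real p powi v" "b = of_int n2 * real p powi v"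
      using a b le padic_abs_le_power_int_iff[OF p] v by (metis order_refl)
    then have "a + b = of_int (n1 + n2) * real p powi v"
      by (simp add: distrib_right)
    then show ?thesis
      using padic_abs_le_power_int_iff[OF p] of_int_mult_power_int_in_Hp v by metis
  qed
  from this[of a b] this[of b a] assms show ?thesis
    by (cases "padic_abs p a \<le> padic_abs p b"; cases "a = 0"; cases "b = 0") (auto simp: add.commute)
qed

lemma Hp_power_int_mult:
  assumes "prime p" "x \<in> Hp p"
  shows "real p powi a * x \<in> Hp p"
proof (cases "x = 0")
  case False
  then obtain m v where "x = of_int m * real p powi v"
    using Hp_normal_form[OF assms] by blast
  then have "real p powi a * x = of_int m * real p powi (v + a)"
    using prime_real_gt_1[OF assms(1)] by (simp add: power_int_add)
  then show ?thesis
    using of_int_mult_power_int_in_Hp by simp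
qed (use of_int_mult_power_int_in_Hp[of 0] in simp)

lemma padic_abs_power_int_mult:
  assumes p: "prime p" and "x \<in> Hp p"
  shows "padic_abs p (real p powi a * x) = real p powi (- a) * padic_abs p x"
proof (cases "x = 0")
  case False
  then obtain m v where m: "\<not> int p dvd m" "x = of_int m * real p powi v"
    using Hp_normal_form[OF assms] by blast
  then have "real p powi a * x = of_int m * real p powi (v + a)"
    using prime_real_gt_1[OF p] by (simp add: power_int_add)
  then have "padic_abs p (real p powi a * x) = real p powi (- a + - v)"
    using padic_abs_normal_form[OF p m(1)] by (simp add: add.commute)
  also have "\<dots> = real p powi (- a) * real p powi (- v)"
    by (rule power_int_add) (use prime_real_gt_1[OF p] in simp)
  finally show ?thesis
    using padic_abs_normal_form[OF p m(1)] m(2) by simp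
qed (simp add: padic_abs_def)

lemma padic_abs_of_int_le_1: "prime p \<Longrightarrow> padic_abs p (of_int n) \<le> 1"
  using padic_abs_le_power_int_iff[of p "of_int n" 0] of_int_mult_power_int_in_Hp[of n p 0] by simp

lemma Hp_Ints_if_padic_abs_less:
  assumes p: "prime p" and x: "x \<in> Hp p" and less: "padic_abs p x < real p"
  shows "x \<in> \<int>"
proof (cases "x = 0")
  case False
  then obtain v where v: "padic_abs p x = real p powi (- v)"
    using padic_abs_Hp_cases[OF p x] by blast
  with less have "\<not> real p powi 1 \<le> real p powi (- v)"
    by simp
  then have "- v \<le> 0"
    using power_int_le_power_int_iff[OF prime_real_gt_1[OF p], of 1 "- v"] by simp
  then have "padic_abs p x \<le> real p powi (- 0)"
    using v power_int_le_power_int_iff[OF prime_real_gt_1[OF p], of "- v" 0] by simp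
  then obtain n :: int where "x = of_int n"
    using padic_abs_le_power_int_iff[OF p x, of 0] by auto
  then show ?thesis by simp
qed simp

section \<open>One-sided affine germs\<close>

definition affine_germ :: "(real \<Rightarrow> real) \<Rightarrow> real \<Rightarrow> real \<Rightarrow> real filter \<Rightarrow> bool" where
  "affine_germ f x s F \<longleftrightarrow> (\<forall>\<^sub>F t in F. f t = f x + s * (t - x))"

lemma affine_germ_at_right_if_affine:
  assumes "u \<le> x" "x < v" "\<forall>t\<in>{u..v}. f t = s * t + c"
  shows "affine_germ f x s (at_right x)"
  unfolding affine_germ_def eventually_at_right_field
  using assms by (intro exI[of _ v]) (auto simp: algebra_simps)

lemma affine_germ_at_left_if_affine:
  assumes "u < x" "x \<le> v" "\<forall>t\<in>{u..v}. f t = s * t + c"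
  shows "affine_germ f x s (at_left x)"
  unfolding affine_germ_def eventually_at_left_field
  using assms by (intro exI[of _ u]) (auto simp: algebra_simps)

lemma affine_germ_has_real_derivative_iff:
  assumes "affine_germ f x s (at x within S)" "at x within S \<noteq> bot"
  shows "(f has_real_derivative h) (at x within S) \<longleftrightarrow> h = s"
proof -
  have "\<forall>\<^sub>F y in at x within S. (f y - f x) / (y - x) = s"
    using assms(1) eventually_neq_at_within[of x x S] unfolding affine_germ_def
    by eventually_elim simp
  then have "((\<lambda>y. (f y - f x) / (y - x)) \<longlongrightarrow> h) (at x within S) \<longleftrightarrow> ((\<lambda>y. s) \<longlongrightarrow> h) (at x within S)"
    by (rule tendsto_cong)
  then show ?thesis
    using assms(2) by (auto simp: has_field_derivative_iff tendsto_const_iff)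
qed

lemma right_slopes_eq: "affine_germ f x s (at_right x) \<Longrightarrow> right_slopes f x = {s}"
  unfolding right_slopes_def
  using affine_germ_has_real_derivative_iff trivial_limit_at_right_real by blast

lemma left_slopes_eq: "affine_germ f x s (at_left x) \<Longrightarrow> left_slopes f x = {s}"
  unfolding left_slopes_def
  using affine_germ_has_real_derivative_iff trivial_limit_at_left_real by blast

lemma slopes_eq_Un: "slopes f x = left_slopes f x \<union> right_slopes f x"
  unfolding slopes_def left_slopes_def right_slopes_def by auto

lemma slopes_eq_germs:
  "affine_germ f x a (at_right x) \<Longrightarrow> affine_germ f x b (at_left x) \<Longrightarrow> slopes f x = {a, b}"
  using right_slopes_eq left_slopes_eq slopes_eq_Un by auto

lemma affine_germ_add:
  assumes "affine_germ f x a F" "affine_germ g x b F"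
  shows "affine_germ (\<lambda>t. f t + g t) x (a + b) F"
  using assms unfolding affine_germ_def
proof eventually_elim
  case (elim t)
  show ?case by (subst elim(1), subst elim(2)) (simp add: algebra_simps)
qed

lemma affine_germ_cmult:
  assumes "affine_germ f x s F"
  shows "affine_germ (\<lambda>t. c * f t) x (c * s) F"
  using assms unfolding affine_germ_def
proof eventually_elim
  case (elim t)
  show ?case by (subst elim) (simp add: algebra_simps)
qed

lemma eventually_at_left_less: "\<forall>\<^sub>F t in at_left x. t < (x::real)"
  by (simp add: eventually_at_filter)

lemma tendsto_divide_at_within: "0 < q \<Longrightarrow> ((\<lambda>t. t / q) \<longlongrightarrow> x) (at (q * x) within S)"
  for q x :: real
  using tendsto_divide[OF tendsto_ident_at tendsto_const, of q "q * x" S] by simp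

lemma filterlim_divide_at_right:
  fixes q x :: real
  assumes "0 < q"
  shows "filterlim (\<lambda>t. t / q) (at_right x) (at_right (q * x))"
proof (rule tendsto_imp_filterlim_at_right[OF tendsto_divide_at_within[OF assms]])
  show "\<forall>\<^sub>F t in at_right (q * x). x < t / q"
    using eventually_at_right_less[of "q * x"] by eventually_elim (use assms in \<open>simp add: field_simps\<close>)
qed

lemma filterlim_divide_at_left:
  fixes q x :: real
  assumes "0 < q"
  shows "filterlim (\<lambda>t. t / q) (at_left x) (at_left (q * x))"
proof (rule tendsto_imp_filterlim_at_left[OF tendsto_divide_at_within[OF assms]])
  show "\<forall>\<^sub>F t in at_left (q * x). t / q < x"
    using eventually_at_left_less[of "q * x"] by eventually_elim (use assms in \<open>simp add: field_simps\<close>)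
qed

lemma affine_germ_rescale:
  assumes q: "0 < q" and per: "\<And>t. 0 < t \<Longrightarrow> f (q * t) = f t" and "0 < x"
    and germ: "affine_germ f x s F" and lim: "filterlim (\<lambda>t. t / q) F G" and pos: "\<forall>\<^sub>F t in G. 0 < t"
  shows "affine_germ f (q * x) (s / q) G"
proof -
  have "\<forall>\<^sub>F t in G. f (t / q) = f x + s * (t / q - x)"
    using germ lim unfolding affine_germ_def filterlim_iff by blast
  with pos show ?thesis
    unfolding affine_germ_def
  proof eventually_elim
    case (elim t)
    have "f t = f (q * (t / q))"
      using q by simp
    also have "\<dots> = f x + s * (t / q - x)"
      using per[of "t / q"] elim q by simp
    finally show ?case
      using per[OF \<open>0 < x\<close>] q by (simp add: field_simps)
  qed
qed

lemma affine_germ_at_left_eventually: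
  assumes "affine_germ f x s (at_left x)"
  shows "\<forall>\<^sub>F y in at_left x. affine_germ f y s (at_left y)"
proof -
  obtain b where b: "b < x" "\<And>t. b < t \<Longrightarrow> t < x \<Longrightarrow> f t = f x + s * (t - x)"
    using assms unfolding affine_germ_def eventually_at_left_field by blast
  have "affine_germ f y s (at_left y)" if y: "b < y" "y < x" for y
    unfolding affine_germ_def eventually_at_left_field
  proof (intro exI[of _ b] conjI allI impI)
    fix t assume "b < t" "t < y"
    then have "f t = f x + s * (t - x)" "f y = f x + s * (y - x)"
      using b(2) y by auto
    then show "f t = f y + s * (t - y)"
      by (simp add: right_diff_distrib)
  qed (fact y)
  then show ?thesis
    using eventually_at_left_real[OF b(1)] by (auto elim: eventually_mono)
qed

lemma eventually_side_sign:
  assumes "F = at_left x \<or> F = at_right x"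
  shows "(\<forall>\<^sub>F t in F. 0 \<le> t - x) \<or> (\<forall>\<^sub>F t in F. t - x \<le> (0::real))"
  using assms eventually_at_left_less[of x] eventually_at_right_less[of x]
  by (metis (mono_tags, lifting) diff_ge_0_iff_ge diff_le_0_iff_le eventually_mono less_imp_le)

lemma affine_eventually_sign:
  fixes c d x :: real
  assumes F: "F = at_left x \<or> F = at_right x"
  shows "0 \<le> c \<and> (\<forall>\<^sub>F t in F. 0 \<le> c + d * (t - x)) \<or> c \<le> 0 \<and> (\<forall>\<^sub>F t in F. c + d * (t - x) \<le> 0)"
proof -
  have "((\<lambda>t. c + d * (t - x)) \<longlongrightarrow> c + d * (x - x)) (at x within S)" for S
    by (intro tendsto_intros)
  then have lim: "((\<lambda>t. c + d * (t - x)) \<longlongrightarrow> c) F"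
    using F by auto
  consider "0 < c" | "c < 0" | "c = 0"
    by linarith
  then show ?thesis
  proof cases
    case 1
    then show ?thesis
      using order_tendstoD(1)[OF lim 1] by (auto elim: eventually_mono)
  next
    case 2
    then show ?thesis
      using order_tendstoD(2)[OF lim 2] by (auto elim: eventually_mono)
  next
    case 3
    consider (right) "\<forall>\<^sub>F t in F. 0 \<le> t - x" | (left) "\<forall>\<^sub>F t in F. t - x \<le> 0"
      using eventually_side_sign[OF F] by blast
    then show ?thesis
    proof cases
      case right
      show ?thesis
      proof (cases "0 \<le> d")
        case True
        with right 3 show ?thesis by (intro disjI1) (auto elim: eventually_mono)
      next
        case False
        with right 3 show ?thesis by (intro disjI2) (auto elim: eventually_mono simp: mult_nonpos_nonneg)
      qed
    next
      case left
      show ?thesis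
      proof (cases "0 \<le> d")
        case True
        with left 3 show ?thesis by (intro disjI2) (auto elim: eventually_mono simp: mult_nonneg_nonpos)
      next
        case False
        with left 3 show ?thesis by (intro disjI1) (auto elim: eventually_mono simp: mult_nonpos_nonpos)
      qed
    qed
  qed
qed

lemma affine_germ_max:
  assumes f: "affine_germ f x a F" and g: "affine_germ g x b F" and F: "F = at_left x \<or> F = at_right x"
  shows "affine_germ (\<lambda>t. max (f t) (g t)) x a F \<or> affine_germ (\<lambda>t. max (f t) (g t)) x b F"
proof -
  have diff: "\<forall>\<^sub>F t in F. f t - g t = (f x - g x) + (a - b) * (t - x)"
    using f g unfolding affine_germ_def
  proof eventually_elim
    case (elim t)
    show ?case by (simp only: elim) (simp add: algebra_simps)
  qed
  consider (f_above) "g x \<le> f x" "\<forall>\<^sub>F t in F. 0 \<le> (f x - g x) + (a - b) * (t - x)"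
    | (g_above) "f x \<le> g x" "\<forall>\<^sub>F t in F. (f x - g x) + (a - b) * (t - x) \<le> 0"
    using affine_eventually_sign[OF F, of "f x - g x" "a - b"] by auto
  then show ?thesis
  proof cases
    case f_above
    from f_above(2) diff f have "\<forall>\<^sub>F t in F. max (f t) (g t) = max (f x) (g x) + a * (t - x)"
      unfolding affine_germ_def by eventually_elim (use f_above(1) in simp)
    then show ?thesis
      unfolding affine_germ_def by blast
  next
    case g_above
    from g_above(2) diff g have "\<forall>\<^sub>F t in F. max (f t) (g t) = max (f x) (g x) + b * (t - x)"
      unfolding affine_germ_def by eventually_elim (use g_above(1) in simp)
    then show ?thesis
      unfolding affine_germ_def by blast
  qed
qed

lemma affine_germ_at_right_mono:
  assumes f: "affine_germ f x a (at_right x)" and g: "affine_germ g x b (at_right x)"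
    and "f x = g x" "\<And>t. f t \<le> g t"
  shows "a \<le> b"
proof -
  have "\<forall>\<^sub>F t in at_right x. x < t \<and> f t = f x + a * (t - x) \<and> g t = g x + b * (t - x)"
    using eventually_at_right_less f g unfolding affine_germ_def by (intro eventually_conj)
  then obtain t where "x < t" "f t = f x + a * (t - x)" "g t = g x + b * (t - x)"
    using eventually_happens'[OF trivial_limit_at_right_real] by blast
  then have "a * (t - x) \<le> b * (t - x)" "0 < t - x"
    using assms(3) assms(4)[of t] by simp_all
  then show ?thesis
    by (simp add: mult_le_cancel_right)
qed

lemma affine_germ_at_left_mono:
  assumes f: "affine_germ f x a (at_left x)" and g: "affine_germ g x b (at_left x)"
    and "f x = g x" "\<And>t. f t \<le> g t"
  shows "b \<le> a"
proof -
  have "\<forall>\<^sub>F t in at_left x. t < x \<and> f t = f x + a * (t - x) \<and> g t = g x + b * (t - x)"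
    using eventually_at_left_less f g unfolding affine_germ_def by (intro eventually_conj)
  then obtain t where "t < x" "f t = f x + a * (t - x)" "g t = g x + b * (t - x)"
    using eventually_happens'[OF trivial_limit_at_left_real] by blast
  then have "a * (t - x) \<le> b * (t - x)" "t - x < 0"
    using assms(3) assms(4)[of t] by simp_all
  then show ?thesis
    by (simp add: mult_le_cancel_right)
qed

lemma difference_quotient_affine_germ:
  assumes germ: "affine_germ f l s F" and lim: "filterlim (\<lambda>e. (1 + e) * l) F G"
    and nonzero: "\<forall>\<^sub>F e in G. e \<noteq> 0"
  shows "((\<lambda>e. (f ((1 + e) * l) - f l) / e) \<longlongrightarrow> l * s) G"
proof -
  have "\<forall>\<^sub>F e in G. f ((1 + e) * l) = f l + s * ((1 + e) * l - l)"
    using germ lim unfolding affine_germ_def filterlim_iff by blast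
  with nonzero have "\<forall>\<^sub>F e in G. l * s = (f ((1 + e) * l) - f l) / e"
    by eventually_elim (simp add: field_simps)
  then show ?thesis
    by (rule Lim_transform_eventually[OF tendsto_const])
qed

section \<open>Piecewise affine functions\<close>

definition affine_on :: "real set \<Rightarrow> real set \<Rightarrow> (real \<Rightarrow> real) \<Rightarrow> bool" where
  "affine_on A I f \<longleftrightarrow> (\<exists>s\<in>A. \<exists>c. \<forall>t\<in>I. f t = s * t + c)"

definition consecutive :: "real set \<Rightarrow> real \<Rightarrow> real \<Rightarrow> bool" where
  "consecutive S u v \<longleftrightarrow> u \<in> S \<and> v \<in> S \<and> u < v \<and> {u<..<v} \<inter> S = {}"

definition piecewise_affine_on :: "real set \<Rightarrow> real \<Rightarrow> real \<Rightarrow> (real \<Rightarrow> real) \<Rightarrow> bool" where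
  "piecewise_affine_on A a b f \<longleftrightarrow> (\<exists>S. finite S \<and> a \<in> S \<and> b \<in> S \<and> S \<subseteq> {a..b} \<and>
     (\<forall>u v. consecutive S u v \<longrightarrow> affine_on A {u..v} f))"

lemma affine_on_subset: "affine_on A I f \<Longrightarrow> J \<subseteq> I \<Longrightarrow> affine_on A J f"
  unfolding affine_on_def by blast

lemma consecutive_Max_Min:
  assumes S: "finite S" "a \<in> S" "b \<in> S" and "P a" "\<not> P b"
    and down: "\<And>s t. s \<le> t \<Longrightarrow> P t \<Longrightarrow> P s"
  shows "consecutive S (Max {s\<in>S. P s}) (Min {s\<in>S. \<not> P s})"
proof -
  let ?u = "Max {s\<in>S. P s}" and ?v = "Min {s\<in>S. \<not> P s}"
  have u: "?u \<in> {s\<in>S. P s}"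
    by (rule Max_in) (use assms in auto)
  have v: "?v \<in> {s\<in>S. \<not> P s}"
    by (rule Min_in) (use assms in auto)
  have "?u < ?v"
    using u v down[of ?v ?u] by force
  moreover have "{?u<..<?v} \<inter> S = {}"
  proof (intro equalityI subsetI)
    fix w assume "w \<in> {?u<..<?v} \<inter> S"
    then have "?u < w" "w < ?v" "w \<in> S" by auto
    show "w \<in> {}"
    proof (cases "P w")
      case True
      then have "w \<le> ?u" using \<open>w \<in> S\<close> S(1) by (intro Max_ge) auto
      with \<open>?u < w\<close> show ?thesis by simp
    next
      case False
      then have "?v \<le> w" using \<open>w \<in> S\<close> S(1) by (intro Min_le) auto
      with \<open>w < ?v\<close> show ?thesis by simp
    qed
  qed simp
  ultimately show ?thesis
    using u v unfolding consecutive_def by simp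
qed

lemma consecutive_around_right:
  assumes "finite S" "a \<in> S" "b \<in> S" "a \<le> x" "x < b"
  obtains u v where "consecutive S u v" "u \<le> x" "x < v"
proof -
  have "consecutive S (Max {s\<in>S. s \<le> x}) (Min {s\<in>S. \<not> s \<le> x})"
    using assms consecutive_Max_Min[of S a b "\<lambda>s. s \<le> x"] by auto
  moreover have "Max {s\<in>S. s \<le> x} \<in> {s\<in>S. s \<le> x}" "Min {s\<in>S. \<not> s \<le> x} \<in> {s\<in>S. \<not> s \<le> x}"
    using assms by (intro Max_in Min_in; force)+
  ultimately show ?thesis using that by auto
qed

lemma consecutive_around_left:
  assumes "finite S" "a \<in> S" "b \<in> S" "a < x" "x \<le> b"
  obtains u v where "consecutive S u v" "u < x" "x \<le> v"
proof -
  have "consecutive S (Max {s\<in>S. s < x}) (Min {s\<in>S. \<not> s < x})"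
    using assms consecutive_Max_Min[of S a b "\<lambda>s. s < x"] by auto
  moreover have "Max {s\<in>S. s < x} \<in> {s\<in>S. s < x}" "Min {s\<in>S. \<not> s < x} \<in> {s\<in>S. \<not> s < x}"
    using assms by (intro Max_in Min_in; force)+
  ultimately show ?thesis using that by auto
qed

lemma consecutive_refine:
  assumes S: "finite S" "a \<in> S" "b \<in> S" and "S \<subseteq> T" "T \<subseteq> {a..b}" and T: "consecutive T u v"
  obtains u' v' where "consecutive S u' v'" "u' \<le> u" "v \<le> v'"
proof -
  have "a \<le> u" "u < b"
    using T \<open>T \<subseteq> {a..b}\<close> unfolding consecutive_def by auto
  then obtain u' v' where uv': "consecutive S u' v'" "u' \<le> u" "u < v'"
    using consecutive_around_right[OF S] by blast
  have "v \<le> v'"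
    using uv' T \<open>S \<subseteq> T\<close> unfolding consecutive_def by (metis disjoint_iff greaterThanLessThan_iff not_le subsetD)
  with uv' that show ?thesis by blast
qed

lemma affine_on_consecutive_refine:
  assumes S: "finite S" "a \<in> S" "b \<in> S" and "S \<subseteq> T" "T \<subseteq> {a..b}"
    and aff: "\<And>u v. consecutive S u v \<Longrightarrow> affine_on A {u..v} f" and "consecutive T u v"
  shows "affine_on A {u..v} f"
proof -
  obtain u' v' where "consecutive S u' v'" "u' \<le> u" "v \<le> v'"
    using consecutive_refine[OF assms(1-5) \<open>consecutive T u v\<close>] by blast
  then show ?thesis
    using aff affine_on_subset[of A "{u'..v'}" f "{u..v}"] by auto
qed

lemma piecewise_affine_on_germs:
  assumes "piecewise_affine_on A a b f"
  obtains \<Sigma> where "finite \<Sigma>" "\<Sigma> \<subseteq> A"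
    "\<And>x. a \<le> x \<Longrightarrow> x < b \<Longrightarrow> \<exists>s\<in>\<Sigma>. affine_germ f x s (at_right x)"
    "\<And>x. a < x \<Longrightarrow> x \<le> b \<Longrightarrow> \<exists>s\<in>\<Sigma>. affine_germ f x s (at_left x)"
proof -
  obtain S where S: "finite S" "a \<in> S" "b \<in> S"
    and aff: "\<And>u v. consecutive S u v \<Longrightarrow> affine_on A {u..v} f"
    using assms unfolding piecewise_affine_on_def by blast
  define \<Sigma> where "\<Sigma> = {s\<in>A. \<exists>u v c. consecutive S u v \<and> (\<forall>t\<in>{u..v}. f t = s * t + c)}"
  have "\<Sigma> \<subseteq> (\<lambda>(u, v). (f v - f u) / (v - u)) ` (S \<times> S)"
  proof
    fix s assume "s \<in> \<Sigma>"
    then obtain u v c where uv: "consecutive S u v" "\<forall>t\<in>{u..v}. f t = s * t + c"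
      unfolding \<Sigma>_def by blast
    then have "s = (f v - f u) / (v - u)"
      unfolding consecutive_def by (auto simp: field_simps)
    with uv(1) show "s \<in> (\<lambda>(u, v). (f v - f u) / (v - u)) ` (S \<times> S)"
      unfolding consecutive_def by force
  qed
  then have "finite \<Sigma>"
    using S(1) finite_subset by blast
  moreover have "\<exists>s\<in>\<Sigma>. affine_germ f x s (at_right x)" if x: "a \<le> x" "x < b" for x
  proof -
    obtain u v where uv: "consecutive S u v" "u \<le> x" "x < v"
      using consecutive_around_right[OF S x] by blast
    then obtain s c where "s \<in> A" "\<forall>t\<in>{u..v}. f t = s * t + c"
      using aff unfolding affine_on_def by blast
    then show ?thesis
      using uv affine_germ_at_right_if_affine unfolding \<Sigma>_def by blast
  qed
  moreover have "\<exists>s\<in>\<Sigma>. affine_germ f x s (at_left x)" if x: "a < x" "x \<le> b" for x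
  proof -
    obtain u v where uv: "consecutive S u v" "u < x" "x \<le> v"
      using consecutive_around_left[OF S x] by blast
    then obtain s c where "s \<in> A" "\<forall>t\<in>{u..v}. f t = s * t + c"
      using aff unfolding affine_on_def by blast
    then show ?thesis
      using uv affine_germ_at_left_if_affine unfolding \<Sigma>_def by blast
  qed
  ultimately show ?thesis
    using that unfolding \<Sigma>_def by blast
qed

lemma affine_on_scale_shift:
  assumes "affine_on A I f" "\<And>s. s \<in> A \<Longrightarrow> c * s \<in> B"
  shows "affine_on B I (\<lambda>t. c * f t + d)"
proof -
  obtain s e where s: "s \<in> A" "\<forall>t\<in>I. f t = s * t + e"
    using assms(1) unfolding affine_on_def by blast
  have "\<forall>t\<in>I. c * f t + d = (c * s) * t + (c * e + d)"
    using s(2) by (simp add: distrib_left mult.assoc)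
  then show ?thesis
    unfolding affine_on_def using assms(2)[OF s(1)] by blast
qed

lemma piecewise_affine_on_scale_shift:
  assumes "piecewise_affine_on A a b f" "\<And>s. s \<in> A \<Longrightarrow> c * s \<in> B"
  shows "piecewise_affine_on B a b (\<lambda>t. c * f t + d)"
proof -
  obtain S where S: "finite S" "a \<in> S" "b \<in> S" "S \<subseteq> {a..b}"
    and aff: "\<And>u v. consecutive S u v \<Longrightarrow> affine_on A {u..v} f"
    using assms(1) unfolding piecewise_affine_on_def by blast
  show ?thesis
    unfolding piecewise_affine_on_def
    using S affine_on_scale_shift[OF aff assms(2)] by blast
qed

lemma affine_sign_change_zero:
  fixes \<sigma> \<kappa> t\<^sub>1 t\<^sub>2 :: real
  assumes "\<sigma> * t\<^sub>1 + \<kappa> < 0" "0 < \<sigma> * t\<^sub>2 + \<kappa>"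
  obtains z where "min t\<^sub>1 t\<^sub>2 < z" "z < max t\<^sub>1 t\<^sub>2" "\<sigma> * z + \<kappa> = 0"
proof -
  have "\<sigma> \<noteq> 0"
    using assms by auto
  define z where "z = - \<kappa> / \<sigma>"
  have z: "\<sigma> * z + \<kappa> = 0"
    using \<open>\<sigma> \<noteq> 0\<close> by (simp add: z_def)
  then have "\<sigma> * t\<^sub>1 < \<sigma> * z" "\<sigma> * z < \<sigma> * t\<^sub>2"
    using assms by linarith+
  then have "t\<^sub>1 < z \<and> z < t\<^sub>2 \<or> t\<^sub>2 < z \<and> z < t\<^sub>1"
    using \<open>\<sigma> \<noteq> 0\<close> by (cases "0 < \<sigma>") (auto simp: mult_less_cancel_left)
  then show ?thesis
    using that z by auto
qed

lemma affine_on_max: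
  assumes f: "affine_on A {x..y} f" and g: "affine_on A {x..y} g"
    and no_crossing: "(\<forall>t\<in>{x<..<y}. f t \<noteq> g t) \<or> (\<forall>t\<in>{x..y}. f t = g t)"
  shows "affine_on A {x..y} (\<lambda>t. max (f t) (g t))"
proof -
  obtain s\<^sub>1 c\<^sub>1 s\<^sub>2 c\<^sub>2 where s: "\<forall>t\<in>{x..y}. f t = s\<^sub>1 * t + c\<^sub>1" "\<forall>t\<in>{x..y}. g t = s\<^sub>2 * t + c\<^sub>2"
    using f g unfolding affine_on_def by blast
  have "(\<forall>t\<in>{x..y}. g t \<le> f t) \<or> (\<forall>t\<in>{x..y}. f t \<le> g t)"
  proof (rule ccontr)
    assume "\<not> ?thesis"
    then obtain t\<^sub>1 t\<^sub>2 where t: "t\<^sub>1 \<in> {x..y}" "t\<^sub>2 \<in> {x..y}" "f t\<^sub>1 < g t\<^sub>1" "g t\<^sub>2 < f t\<^sub>2"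
      by (auto simp: not_le)
    then have "(s\<^sub>1 - s\<^sub>2) * t\<^sub>1 + (c\<^sub>1 - c\<^sub>2) < 0" "0 < (s\<^sub>1 - s\<^sub>2) * t\<^sub>2 + (c\<^sub>1 - c\<^sub>2)"
      using s by (auto simp: algebra_simps)
    then obtain z where z: "min t\<^sub>1 t\<^sub>2 < z" "z < max t\<^sub>1 t\<^sub>2" "(s\<^sub>1 - s\<^sub>2) * z + (c\<^sub>1 - c\<^sub>2) = 0"
      by (rule affine_sign_change_zero)
    then have "z \<in> {x<..<y}"
      using t(1,2) by auto
    moreover have "f z = g z"
      using s z(3) calculation by (auto simp: algebra_simps)
    ultimately show False
      using no_crossing t(1,3) by force
  qed
  then have "(\<forall>t\<in>{x..y}. max (f t) (g t) = f t) \<or> (\<forall>t\<in>{x..y}. max (f t) (g t) = g t)"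
    by (auto simp: max_def)
  then show ?thesis
    using f g unfolding affine_on_def by (elim disjE) (metis (no_types, lifting))+
qed

lemma finite_zeros_of_affine:
  fixes s\<^sub>1 s\<^sub>2 c\<^sub>1 c\<^sub>2 :: real
  assumes "s\<^sub>1 \<noteq> s\<^sub>2 \<or> c\<^sub>1 \<noteq> c\<^sub>2"
  shows "finite {t. s\<^sub>1 * t + c\<^sub>1 = s\<^sub>2 * t + c\<^sub>2}"
proof (cases "s\<^sub>1 = s\<^sub>2")
  case False
  have "{t. s\<^sub>1 * t + c\<^sub>1 = s\<^sub>2 * t + c\<^sub>2} \<subseteq> {(c\<^sub>2 - c\<^sub>1) / (s\<^sub>1 - s\<^sub>2)}"
    using False by (auto simp: field_simps)
  then show ?thesis
    using finite_subset by blast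
qed (use assms in simp)

lemma piecewise_affine_on_max:
  assumes "piecewise_affine_on A a b f" "piecewise_affine_on A a b g"
  shows "piecewise_affine_on A a b (\<lambda>t. max (f t) (g t))"
proof -
  obtain S\<^sub>1 where S\<^sub>1: "finite S\<^sub>1" "a \<in> S\<^sub>1" "b \<in> S\<^sub>1" "S\<^sub>1 \<subseteq> {a..b}"
    and f: "\<And>u v. consecutive S\<^sub>1 u v \<Longrightarrow> affine_on A {u..v} f"
    using assms(1) unfolding piecewise_affine_on_def by blast
  obtain S\<^sub>2 where S\<^sub>2: "finite S\<^sub>2" "a \<in> S\<^sub>2" "b \<in> S\<^sub>2" "S\<^sub>2 \<subseteq> {a..b}"
    and g: "\<And>u v. consecutive S\<^sub>2 u v \<Longrightarrow> affine_on A {u..v} g"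
    using assms(2) unfolding piecewise_affine_on_def by blast
  define S\<^sub>0 where "S\<^sub>0 = S\<^sub>1 \<union> S\<^sub>2"
  have S\<^sub>0: "finite S\<^sub>0" "a \<in> S\<^sub>0" "b \<in> S\<^sub>0" "S\<^sub>0 \<subseteq> {a..b}"
    using S\<^sub>1 S\<^sub>2 by (auto simp: S\<^sub>0_def)
  have affine_S\<^sub>0: "affine_on A {u..v} f \<and> affine_on A {u..v} g" if "consecutive S\<^sub>0 u v" for u v
    using affine_on_consecutive_refine[OF S\<^sub>1(1-3) _ S\<^sub>0(4) f that]
      affine_on_consecutive_refine[OF S\<^sub>2(1-3) _ S\<^sub>0(4) g that] by (auto simp: S\<^sub>0_def)
  \<comment> \<open>Add the crossing points of f and g inside every piece on which they differ.\<close>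
  define crossings where "crossings u v = {t\<in>{u..v}. f t = g t}" for u v
  define Z where "Z = (\<Union>(u, v)\<in>{(u, v). consecutive S\<^sub>0 u v \<and> (\<exists>t\<in>{u..v}. f t \<noteq> g t)}. crossings u v)"
  have "finite (crossings u v)"
    if uv: "consecutive S\<^sub>0 u v" and differ: "\<exists>t\<in>{u..v}. f t \<noteq> g t" for u v
  proof -
    obtain s\<^sub>1 c\<^sub>1 s\<^sub>2 c\<^sub>2 where s: "\<forall>t\<in>{u..v}. f t = s\<^sub>1 * t + c\<^sub>1" "\<forall>t\<in>{u..v}. g t = s\<^sub>2 * t + c\<^sub>2"
      using affine_S\<^sub>0[OF uv] unfolding affine_on_def by blast
    then have "s\<^sub>1 \<noteq> s\<^sub>2 \<or> c\<^sub>1 \<noteq> c\<^sub>2"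
      using differ by auto
    then show ?thesis
      unfolding crossings_def using s
      by (intro finite_subset[OF _ finite_zeros_of_affine[of s\<^sub>1 s\<^sub>2 c\<^sub>1 c\<^sub>2]]) auto
  qed
  moreover have "{(u, v). consecutive S\<^sub>0 u v \<and> (\<exists>t\<in>{u..v}. f t \<noteq> g t)} \<subseteq> S\<^sub>0 \<times> S\<^sub>0"
    unfolding consecutive_def by auto
  then have "finite {(u, v). consecutive S\<^sub>0 u v \<and> (\<exists>t\<in>{u..v}. f t \<noteq> g t)}"
    using finite_subset S\<^sub>0(1) by blast
  ultimately have "finite Z"
    unfolding Z_def by (intro finite_UN_I) auto
  have "Z \<subseteq> {a..b}"
  proof
    fix t assume "t \<in> Z"
    then obtain u v where "u \<in> S\<^sub>0" "v \<in> S\<^sub>0" "u \<le> t" "t \<le> v"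
      unfolding Z_def crossings_def consecutive_def by auto
    then show "t \<in> {a..b}"
      using S\<^sub>0(4) by force
  qed
  define S where "S = S\<^sub>0 \<union> Z"
  have S: "finite S" "a \<in> S" "b \<in> S" "S\<^sub>0 \<subseteq> S" "S \<subseteq> {a..b}"
    using S\<^sub>0 \<open>finite Z\<close> \<open>Z \<subseteq> {a..b}\<close> unfolding S_def by auto
  have "affine_on A {x..y} (\<lambda>t. max (f t) (g t))" if xy: "consecutive S x y" for x y
  proof -
    obtain u v where uv: "consecutive S\<^sub>0 u v" "u \<le> x" "y \<le> v"
      using consecutive_refine[OF S\<^sub>0(1-3) S(4) S(5) xy] by blast
    have "(\<forall>t\<in>{x<..<y}. f t \<noteq> g t) \<or> (\<forall>t\<in>{x..y}. f t = g t)"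
    proof (cases "\<exists>t\<in>{u..v}. f t \<noteq> g t")
      case True
      then have "crossings u v \<subseteq> S"
        using uv(1) unfolding S_def Z_def by blast
      then show ?thesis
        using xy uv(2,3) unfolding consecutive_def crossings_def by fastforce
    qed (use uv in auto)
    then show ?thesis
      using affine_S\<^sub>0[OF uv(1)] uv(2,3) by (intro affine_on_max) (auto elim: affine_on_subset)
  qed
  then show ?thesis
    unfolding piecewise_affine_on_def using S by blast
qed

section \<open>Real-valued elements of \<open>K(C\<^sub>p)\<close>\<close>

lemma K_real_iff:
  "K_real p f \<longleftrightarrow> continuous_on {0<..} f \<and> (\<forall>x>0. f (real p * x) = f x) \<and>
     (\<forall>a b. 0 < a \<longrightarrow> a < b \<longrightarrow> piecewise_affine_on (Hp p) a b f)"
  unfolding K_real_def piecewise_affine_on_def consecutive_def affine_on_def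
  by (simp add: Ball_def imp_conjL)

lemma K_real_germs:
  assumes "K_real p f" "0 < x"
  obtains a b where "a \<in> Hp p" "b \<in> Hp p"
    "affine_germ f x a (at_right x)" "affine_germ f x b (at_left x)"
proof -
  have "piecewise_affine_on (Hp p) (x / 2) (2 * x) f"
    using assms unfolding K_real_iff by simp
  then obtain \<Sigma> where \<Sigma>: "finite \<Sigma>" "\<Sigma> \<subseteq> Hp p"
    "\<And>y. x / 2 \<le> y \<Longrightarrow> y < 2 * x \<Longrightarrow> \<exists>s\<in>\<Sigma>. affine_germ f y s (at_right y)"
    "\<And>y. x / 2 < y \<Longrightarrow> y \<le> 2 * x \<Longrightarrow> \<exists>s\<in>\<Sigma>. affine_germ f y s (at_left y)"
    by (rule piecewise_affine_on_germs) blast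
  have "\<exists>s\<in>\<Sigma>. affine_germ f x s (at_right x)" "\<exists>s\<in>\<Sigma>. affine_germ f x s (at_left x)"
    using \<Sigma>(3,4) assms(2) by simp_all
  then show ?thesis
    using that \<Sigma>(2) by blast
qed

lemma K_real_slopes_nonempty:
  assumes "K_real p f" "0 < x"
  shows "slopes f x \<noteq> {}"
proof -
  obtain a where "affine_germ f x a (at_right x)"
    using K_real_germs[OF assms] by metis
  then show ?thesis
    using right_slopes_eq slopes_eq_Un by blast
qed

lemma K_real_periodic_power_int:
  assumes p: "prime p" and K: "K_real p f" and "0 < t"
  shows "f (real p powi k * t) = f t"
proof -
  have pow: "f (real p ^ n * t) = f t" if "0 < t" for n t
  proof (induction n)
    case (Suc n)
    have "f (real p ^ Suc n * t) = f (real p * (real p ^ n * t))"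
      by (simp add: algebra_simps)
    also have "\<dots> = f (real p ^ n * t)"
      using K that prime_gt_0_nat[OF p] unfolding K_real_iff by simp
    finally show ?case using Suc by simp
  qed simp
  show ?thesis
  proof (cases "0 \<le> k")
    case True
    then show ?thesis
      using pow[OF \<open>0 < t\<close>, of "nat k"] by (simp add: power_int_def)
  next
    case False
    then have "real p ^ nat (- k) * (real p powi k * t) = t"
      using prime_real_gt_1[OF p] by (simp add: power_int_def field_simps)
    moreover have "0 < real p powi k * t"
      using prime_real_gt_1[OF p] \<open>0 < t\<close> by simp
    ultimately show ?thesis
      using pow[of "real p powi k * t" "nat (- k)"] by metis
  qed
qed

lemma K_real_scale_shift:
  assumes "K_real p f" "\<And>s. s \<in> Hp p \<Longrightarrow> c * s \<in> Hp p"
  shows "K_real p (\<lambda>t. c * f t + d)"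
proof -
  have f: "continuous_on {0<..} f" "\<forall>x>0. f (real p * x) = f x"
    "\<And>a b. 0 < a \<Longrightarrow> a < b \<Longrightarrow> piecewise_affine_on (Hp p) a b f"
    using assms(1) unfolding K_real_iff by blast+
  have "continuous_on {0<..} (\<lambda>t. c * f t + d)"
    using f(1) by (intro continuous_on_add continuous_on_mult_left continuous_on_const)
  then show ?thesis
    unfolding K_real_iff using f(2) piecewise_affine_on_scale_shift[OF f(3) assms(2)] by simp
qed

lemma K_real_add_const: "K_real p f \<Longrightarrow> K_real p (\<lambda>x. f x + c)"
  using K_real_scale_shift[of p f 1 c] by simp

lemma K_real_power_int_mult:
  assumes "prime p" "K_real p f"
  shows "K_real p (\<lambda>x. real p powi a * f x)"
  using K_real_scale_shift[OF assms(2) Hp_power_int_mult[OF assms(1)], of a 0] by simp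

lemma K_real_max:
  assumes "K_real p f" "K_real p g"
  shows "K_real p (\<lambda>x. max (f x) (g x))"
  using assms piecewise_affine_on_max unfolding K_real_iff by (auto intro: continuous_on_max)

lemma slopes_add:
  assumes f: "K_real p f" and g: "K_real p g" and x: "0 < x"
    and h: "h \<in> slopes (\<lambda>t. f t + g t) x"
  shows "\<exists>u\<in>slopes f x \<inter> Hp p. \<exists>v\<in>slopes g x \<inter> Hp p. h = u + v"
proof -
  obtain a b where a: "a \<in> Hp p" "b \<in> Hp p"
    "affine_germ f x a (at_right x)" "affine_germ f x b (at_left x)"
    using K_real_germs[OF f x] by metis
  obtain a' b' where a': "a' \<in> Hp p" "b' \<in> Hp p"
    "affine_germ g x a' (at_right x)" "affine_germ g x b' (at_left x)"
    using K_real_germs[OF g x] by metis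
  have "h \<in> {a + a', b + b'}"
    using h slopes_eq_germs[OF affine_germ_add[OF a(3) a'(3)] affine_germ_add[OF a(4) a'(4)]] by simp
  moreover have "a \<in> slopes f x \<inter> Hp p" "b \<in> slopes f x \<inter> Hp p"
    "a' \<in> slopes g x \<inter> Hp p" "b' \<in> slopes g x \<inter> Hp p"
    using a a' by (simp_all add: slopes_eq_germs)
  ultimately show ?thesis
    by (elim insertE emptyE) blast+
qed

lemma slopes_cmult:
  assumes f: "K_real p f" and x: "0 < x" and h: "h \<in> slopes (\<lambda>t. c * f t) x"
  shows "\<exists>u\<in>slopes f x \<inter> Hp p. h = c * u"
proof -
  obtain a b where a: "a \<in> Hp p" "b \<in> Hp p"
    "affine_germ f x a (at_right x)" "affine_germ f x b (at_left x)"
    using K_real_germs[OF f x] by metis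
  have "h \<in> {c * a, c * b}"
    using h slopes_eq_germs[OF affine_germ_cmult[OF a(3)] affine_germ_cmult[OF a(4)]] by simp
  moreover have "a \<in> slopes f x \<inter> Hp p" "b \<in> slopes f x \<inter> Hp p"
    using a by (simp_all add: slopes_eq_germs)
  ultimately show ?thesis
    by (elim insertE emptyE) blast+
qed

lemma slopes_max:
  assumes f: "K_real p f" and g: "K_real p g" and x: "0 < x"
  shows "slopes (\<lambda>t. max (f t) (g t)) x \<subseteq> slopes f x \<union> slopes g x"
proof -
  obtain a b where a: "affine_germ f x a (at_right x)" "affine_germ f x b (at_left x)"
    using K_real_germs[OF f x] by metis
  obtain a' b' where a': "affine_germ g x a' (at_right x)" "affine_germ g x b' (at_left x)"
    using K_real_germs[OF g x] by metis
  obtain r where r: "affine_germ (\<lambda>t. max (f t) (g t)) x r (at_right x)" "r \<in> {a, a'}"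
    using affine_germ_max[OF a(1) a'(1)] by blast
  obtain l where l: "affine_germ (\<lambda>t. max (f t) (g t)) x l (at_left x)" "l \<in> {b, b'}"
    using affine_germ_max[OF a(2) a'(2)] by blast
  show ?thesis
    using slopes_eq_germs[OF r(1) l(1)] slopes_eq_germs[OF a] slopes_eq_germs[OF a'] r(2) l(2)
    by auto
qed

section \<open>The norm\<close>

lemma power_int_scale_into_Ico:
  fixes b x :: real
  assumes "1 < b" "0 < x"
  obtains k where "1 \<le> b powi k * x" "b powi k * x < b"
proof -
  define n where "n = \<lfloor>log b x\<rfloor>"
  have "b powr real_of_int n \<le> x" "x < b powr real_of_int (n + 1)"
    using floor_log_eq_powr_iff[OF assms(2,1)] n_def by blast+
  moreover have "b powr real_of_int n = b powi n" "b powr real_of_int (n + 1) = b * b powi n"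
    using assms(1) powr_real_of_int'[of b n] powr_real_of_int'[of b "n + 1"]
    by (simp_all add: power_int_add)
  ultimately have "b powi n \<le> x" "x < b * b powi n"
    by simp_all
  then have "1 \<le> b powi (- n) * x" "b powi (- n) * x < b"
    using assms(1) by (simp_all add: power_int_minus field_simps)
  with that show ?thesis by blast
qed

lemma power_int_scale_into_Ioc:
  fixes b x :: real
  assumes "1 < b" "0 < x"
  obtains k where "1 < b powi k * x" "b powi k * x \<le> b"
proof -
  obtain k where k: "1 \<le> b powi k * x" "b powi k * x < b"
    using power_int_scale_into_Ico[OF assms] by blast
  show ?thesis
  proof (cases "b powi k * x = 1")
    case True
    then have "b powi (k + 1) * x = b"
      using assms(1) by (simp add: power_int_add algebra_simps)
    then show ?thesis
      using that[of "k + 1"] assms(1) by simp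
  next
    case False
    then show ?thesis
      using that[of k] k by simp
  qed
qed

lemma slope_norm_power_int_scale:
  assumes p: "prime p" and "s \<in> Hp p"
  shows "padic_abs p (s / real p powi k) / (real p powi k * x) = padic_abs p s / x"
proof -
  have "s / real p powi k = real p powi (- k) * s"
    by (simp add: power_int_minus divide_inverse mult.commute)
  then have "padic_abs p (s / real p powi k) = real p powi k * padic_abs p s"
    using padic_abs_power_int_mult[OF assms, of "- k"] by simp
  then show ?thesis
    using prime_real_gt_1[OF p] by simp
qed

lemma slope_norm_fundamental_domain:
  assumes p: "prime p" and K: "K_real p f" and x: "0 < x" and h: "h \<in> slopes f x"
  obtains y s where "padic_abs p h / x = padic_abs p s / y"
    "1 \<le> y \<and> y < real p \<and> affine_germ f y s (at_right y) \<or>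
     1 < y \<and> y \<le> real p \<and> affine_germ f y s (at_left y)"
proof -
  have per: "\<And>t. 0 < t \<Longrightarrow> f (real p powi k * t) = f t" for k
    using K_real_periodic_power_int[OF p K] .
  have q: "0 < real p powi k" for k
    using prime_real_gt_1[OF p] by simp
  consider (right) "h \<in> right_slopes f x" | (left) "h \<in> left_slopes f x"
    using h slopes_eq_Un by blast
  then show ?thesis
  proof cases
    case right
    obtain s where s: "s \<in> Hp p" "affine_germ f x s (at_right x)"
      using K_real_germs[OF K x] by metis
    obtain k where k: "1 \<le> real p powi k * x" "real p powi k * x < real p"
      using power_int_scale_into_Ico[OF prime_real_gt_1[OF p] x] .
    have "0 < real p powi k * x"
      using q x by simp
    then have "\<forall>\<^sub>F t in at_right (real p powi k * x). 0 < t"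
      using eventually_at_right_less[of "real p powi k * x"] by (auto elim: eventually_mono)
    then have "affine_germ f (real p powi k * x) (s / real p powi k) (at_right (real p powi k * x))"
      using affine_germ_rescale[OF q per x s(2) filterlim_divide_at_right[OF q]] by blast
    moreover have "h = s"
      using right right_slopes_eq[OF s(2)] by simp
    ultimately show ?thesis
      using that slope_norm_power_int_scale[OF p s(1)] k by metis
  next
    case left
    obtain s where s: "s \<in> Hp p" "affine_germ f x s (at_left x)"
      using K_real_germs[OF K x] by metis
    obtain k where k: "1 < real p powi k * x" "real p powi k * x \<le> real p"
      using power_int_scale_into_Ioc[OF prime_real_gt_1[OF p] x] .
    have "\<forall>\<^sub>F t in at_left (real p powi k * x). 0 < t"
      using eventually_at_left_real[of 0 "real p powi k * x"] q x
      by (auto elim: eventually_mono)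
    then have "affine_germ f (real p powi k * x) (s / real p powi k) (at_left (real p powi k * x))"
      using affine_germ_rescale[OF q per x s(2) filterlim_divide_at_left[OF q]] by blast
    moreover have "h = s"
      using left left_slopes_eq[OF s(2)] by simp
    ultimately show ?thesis
      using that slope_norm_power_int_scale[OF p s(1)] k by metis
  qed
qed

lemma pnorm_bdd_above:
  assumes p: "prime p" and K: "K_real p f"
  shows "bdd_above {padic_abs p h / x | x h. 0 < x \<and> h \<in> slopes f x}"
proof -
  have "piecewise_affine_on (Hp p) 1 (real p) f"
    using K prime_real_gt_1[OF p] unfolding K_real_iff by simp
  then obtain \<Sigma> where \<Sigma>: "finite \<Sigma>"
    "\<And>y. 1 \<le> y \<Longrightarrow> y < real p \<Longrightarrow> \<exists>s\<in>\<Sigma>. affine_germ f y s (at_right y)"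
    "\<And>y. 1 < y \<Longrightarrow> y \<le> real p \<Longrightarrow> \<exists>s\<in>\<Sigma>. affine_germ f y s (at_left y)"
    by (rule piecewise_affine_on_germs) blast
  define B where "B = Max (insert 0 (padic_abs p ` \<Sigma>))"
  have "padic_abs p h / x \<le> B" if x: "0 < x" and h: "h \<in> slopes f x" for x h
  proof -
    obtain y s where ys: "padic_abs p h / x = padic_abs p s / y"
      "1 \<le> y \<and> y < real p \<and> affine_germ f y s (at_right y) \<or>
       1 < y \<and> y \<le> real p \<and> affine_germ f y s (at_left y)"
      using slope_norm_fundamental_domain[OF p K x h] by blast
    have "s \<in> \<Sigma>"
      using ys(2) \<Sigma>(2,3) right_slopes_eq left_slopes_eq by (metis singleton_inject)
    then have "padic_abs p s \<le> B"
      unfolding B_def using \<Sigma>(1) by simp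
    moreover have "padic_abs p s / y \<le> padic_abs p s"
      using ys(2) padic_abs_nonneg[OF p, of s] by (auto simp: divide_le_eq mult_le_cancel_left1 not_less)
    ultimately show ?thesis
      using ys(1) by simp
  qed
  then show ?thesis
    unfolding bdd_above_def by blast
qed

lemma pnorm_upper:
  assumes "prime p" "K_real p f" "0 < x" "h \<in> slopes f x"
  shows "padic_abs p h / x \<le> pnorm p f"
  unfolding pnorm_def using assms pnorm_bdd_above[OF assms(1,2)] by (intro cSup_upper) auto

lemma pnorm_least:
  assumes "0 < x\<^sub>0" "slopes f x\<^sub>0 \<noteq> {}"
    and le: "\<And>x h. 0 < x \<Longrightarrow> h \<in> slopes f x \<Longrightarrow> padic_abs p h / x \<le> c"
  shows "pnorm p f \<le> c"
  unfolding pnorm_def using assms(1,2) le by (intro cSup_least) auto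

lemma pnorm_max_le:
  assumes p: "prime p" and f: "K_real p f" and g: "K_real p g"
  shows "pnorm p (\<lambda>x. max (f x) (g x)) \<le> max (pnorm p f) (pnorm p g)"
proof (rule pnorm_least[OF zero_less_one K_real_slopes_nonempty[OF K_real_max[OF f g] zero_less_one]])
  fix x h assume x: "0 < x" and "h \<in> slopes (\<lambda>x. max (f x) (g x)) x"
  then have "h \<in> slopes f x \<or> h \<in> slopes g x"
    using slopes_max[OF f g x] by blast
  then show "padic_abs p h / x \<le> max (pnorm p f) (pnorm p g)"
    using pnorm_upper[OF p f x] pnorm_upper[OF p g x]
      max.cobounded1[of "pnorm p f" "pnorm p g"] max.cobounded2[of "pnorm p g" "pnorm p f"]
    by (meson order_trans)
qed

lemma pnorm_add_le:
  assumes p: "prime p" and f: "K_real p f" and g: "K_real p g"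
  shows "pnorm p (\<lambda>x. f x + g x) \<le> max (pnorm p f) (pnorm p g)"
proof (rule pnorm_least[where x\<^sub>0 = 1])
  obtain a where a: "affine_germ f 1 a (at_right 1)"
    using K_real_germs[OF f zero_less_one] by metis
  obtain b where b: "affine_germ g 1 b (at_right 1)"
    using K_real_germs[OF g zero_less_one] by metis
  have "a + b \<in> right_slopes (\<lambda>x. f x + g x) 1"
    using right_slopes_eq[OF affine_germ_add[OF a b]] by simp
  then show "slopes (\<lambda>x. f x + g x) 1 \<noteq> {}"
    using slopes_eq_Un by blast
next
  fix x h assume x: "0 < x" and h: "h \<in> slopes (\<lambda>x. f x + g x) x"
  obtain u v where uv: "u \<in> slopes f x" "v \<in> slopes g x" "u \<in> Hp p" "v \<in> Hp p" "h = u + v"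
    using slopes_add[OF f g x h] by blast
  have "padic_abs p h \<le> padic_abs p u \<or> padic_abs p h \<le> padic_abs p v"
    using padic_abs_ultrametric[OF p uv(3,4)] uv(5) by (simp add: le_max_iff_disj)
  then have "padic_abs p h / x \<le> padic_abs p u / x \<or> padic_abs p h / x \<le> padic_abs p v / x"
    using x by (elim disjE) (simp_all add: divide_right_mono)
  then show "padic_abs p h / x \<le> max (pnorm p f) (pnorm p g)"
    using pnorm_upper[OF p f x uv(1)] pnorm_upper[OF p g x uv(2)]
      max.cobounded1[of "pnorm p f" "pnorm p g"] max.cobounded2[of "pnorm p g" "pnorm p f"] by linarith
qed simp

lemma pnorm_power_int_mult_le:
  assumes p: "prime p" and f: "K_real p f"
  shows "pnorm p (\<lambda>x. real p powi a * f x) \<le> real p powi (- a) * pnorm p f"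
proof (rule pnorm_least[OF zero_less_one K_real_slopes_nonempty[OF K_real_power_int_mult[OF assms]]])
  fix x h assume x: "0 < x" and h: "h \<in> slopes (\<lambda>x. real p powi a * f x) x"
  then obtain u where u: "u \<in> slopes f x" "u \<in> Hp p" "h = real p powi a * u"
    using slopes_cmult[OF f x h] by blast
  have "padic_abs p h / x = real p powi (- a) * (padic_abs p u / x)"
    using padic_abs_power_int_mult[OF p u(2)] u(3) by simp
  also have "\<dots> \<le> real p powi (- a) * pnorm p f"
    using pnorm_upper[OF p f x u(1)] prime_real_gt_1[OF p] by (intro mult_left_mono) simp_all
  finally show "padic_abs p h / x \<le> real p powi (- a) * pnorm p f" .
qed simp

lemma pnorm_power_int_mult:
  assumes p: "prime p" and f: "K_real p f"
  shows "pnorm p (\<lambda>x. real p powi a * f x) = real p powi (- a) * pnorm p f"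
proof (rule antisym)
  show "pnorm p (\<lambda>x. real p powi a * f x) \<le> real p powi (- a) * pnorm p f"
    using pnorm_power_int_mult_le[OF assms] .
  have p0: "real p \<noteq> 0"
    using prime_real_gt_1[OF p] by simp
  have "pnorm p f = pnorm p (\<lambda>x. real p powi (- a) * (real p powi a * f x))"
    using p0 by (simp add: power_int_minus mult.assoc[symmetric])
  also have "\<dots> \<le> real p powi a * pnorm p (\<lambda>x. real p powi a * f x)"
    using pnorm_power_int_mult_le[OF p K_real_power_int_mult[OF assms], of "- a"] by simp
  finally show "real p powi (- a) * pnorm p f \<le> pnorm p (\<lambda>x. real p powi a * f x)"
    using prime_real_gt_1[OF p] by (simp add: power_int_minus field_simps)
qed

lemma pnorm_le_1_iff:
  assumes p: "prime p" and f: "K_real p f"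
  shows "pnorm p f \<le> 1 \<longleftrightarrow>
    (\<forall>x\<in>{1..<real p}. right_slopes f x \<subseteq> \<int>) \<and> (\<forall>x\<in>{1<..real p}. left_slopes f x \<subseteq> \<int>)"
proof
  assume le: "pnorm p f \<le> 1"
  have integral: "s \<in> \<int>" if "1 \<le> y" "y < real p" "s \<in> Hp p" "s \<in> slopes f y" for y s
  proof -
    have "0 < y"
      using that(1) by simp
    then have "padic_abs p s / y \<le> 1"
      using order_trans[OF pnorm_upper[OF p f _ that(4)] le] by blast
    then have "padic_abs p s < real p"
      using that(1,2) by (simp add: divide_le_eq)
    then show ?thesis
      using Hp_Ints_if_padic_abs_less[OF p that(3)] by blast
  qed
  have "right_slopes f x \<subseteq> \<int>" if x: "1 \<le> x" "x < real p" for x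
  proof -
    obtain s where s: "s \<in> Hp p" "affine_germ f x s (at_right x)"
      using K_real_germs[OF f, of x] x by (metis less_le_trans zero_less_one)
    then have "s \<in> slopes f x"
      using right_slopes_eq slopes_eq_Un by blast
    then show ?thesis
      using integral[OF x s(1)] right_slopes_eq[OF s(2)] by simp
  qed
  moreover have "left_slopes f x \<subseteq> \<int>" if x: "1 < x" "x \<le> real p" for x
  proof -
    obtain s where s: "s \<in> Hp p" "affine_germ f x s (at_left x)"
      using K_real_germs[OF f, of x] x by (metis less_trans zero_less_one)
    \<comment> \<open>At \<open>x = p\<close> the bound \<open>|s|\<^sub>p \<le> x\<close> is too weak; move slightly to the left of x.\<close>
    have "\<forall>\<^sub>F y in at_left x. y \<in> {1<..<x} \<and> affine_germ f y s (at_left y)"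
      using eventually_at_left_real[OF x(1)] affine_germ_at_left_eventually[OF s(2)]
      by (rule eventually_conj)
    then obtain y where y: "1 < y" "y < x" "affine_germ f y s (at_left y)"
      using eventually_happens'[OF trivial_limit_at_left_real] by auto
    then have "s \<in> slopes f y"
      using left_slopes_eq slopes_eq_Un by blast
    then have "s \<in> \<int>"
      using integral[of y s] s(1) x(2) y(1,2) by simp
    then show ?thesis
      using left_slopes_eq[OF s(2)] by simp
  qed
  ultimately show "(\<forall>x\<in>{1..<real p}. right_slopes f x \<subseteq> \<int>) \<and> (\<forall>x\<in>{1<..real p}. left_slopes f x \<subseteq> \<int>)"
    by simp
next
  assume integral: "(\<forall>x\<in>{1..<real p}. right_slopes f x \<subseteq> \<int>) \<and> (\<forall>x\<in>{1<..real p}. left_slopes f x \<subseteq> \<int>)"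
  show "pnorm p f \<le> 1"
  proof (rule pnorm_least[OF zero_less_one K_real_slopes_nonempty[OF f zero_less_one]])
    fix x h assume "0 < x" "h \<in> slopes f x"
    then obtain y s where ys: "padic_abs p h / x = padic_abs p s / y"
      "1 \<le> y \<and> y < real p \<and> affine_germ f y s (at_right y) \<or>
       1 < y \<and> y \<le> real p \<and> affine_germ f y s (at_left y)"
      using slope_norm_fundamental_domain[OF p f] by blast
    from ys(2) have "s \<in> \<int>"
    proof (elim disjE conjE)
      assume "1 \<le> y" "y < real p" "affine_germ f y s (at_right y)"
      moreover from this have "right_slopes f y \<subseteq> \<int>"
        using integral by simp
      ultimately show "s \<in> \<int>"
        using right_slopes_eq by blast
    next
      assume "1 < y" "y \<le> real p" "affine_germ f y s (at_left y)"
      moreover from this have "left_slopes f y \<subseteq> \<int>"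
        using integral by simp
      ultimately show "s \<in> \<int>"
        using left_slopes_eq by blast
    qed
    then have "padic_abs p s \<le> 1"
      using padic_abs_of_int_le_1[OF p] by (elim Ints_cases) simp
    moreover have "1 \<le> y"
      using ys(2) by auto
    ultimately show "padic_abs p h / x \<le> 1"
      unfolding ys(1) by (simp add: divide_le_eq)
  qed
qed

lemma pnorm_add_const: "pnorm p (\<lambda>x. f x + c) = pnorm p f"
  by (simp add: pnorm_def slopes_def has_field_derivative_iff)

section \<open>Divisors and the filtration of \<open>H\<^sup>0(D)\<close>\<close>

lemma hplus_affine_germ:
  assumes "0 < l" "affine_germ f l s (at_right l)"
  shows "hplus f l = l * s"
proof -
  have "((\<lambda>e. (1 + e) * l) \<longlongrightarrow> (1 + 0) * l) (at_right 0)"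
    by (intro tendsto_intros)
  moreover have "\<forall>\<^sub>F e in at_right 0. l < (1 + e) * l \<and> e \<noteq> (0::real)"
    using eventually_at_right_less[of 0] by eventually_elim (use assms(1) in simp)
  ultimately have "((\<lambda>e. (f ((1 + e) * l) - f l) / e) \<longlongrightarrow> l * s) (at_right 0)"
    by (intro difference_quotient_affine_germ[OF assms(2)] tendsto_imp_filterlim_at_right)
      (auto elim: eventually_mono)
  then show ?thesis
    unfolding hplus_def by (intro tendsto_Lim) simp_all
qed

lemma hminus_affine_germ:
  assumes "0 < l" "affine_germ f l s (at_left l)"
  shows "hminus f l = l * s"
proof -
  have "((\<lambda>e. (1 + e) * l) \<longlongrightarrow> (1 + 0) * l) (at_left 0)"
    by (intro tendsto_intros)
  moreover have "\<forall>\<^sub>F e in at_left 0. (1 + e) * l < l \<and> e \<noteq> (0::real)"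
    using eventually_at_left_less[of 0] by eventually_elim (use assms(1) in simp)
  ultimately have "((\<lambda>e. (f ((1 + e) * l) - f l) / e) \<longlongrightarrow> l * s) (at_left 0)"
    by (intro difference_quotient_affine_germ[OF assms(2)] tendsto_imp_filterlim_at_left)
      (auto elim: eventually_mono)
  then show ?thesis
    unfolding hminus_def by (intro tendsto_Lim) simp_all
qed

lemma pdiv_representative:
  assumes "H \<in> Cp p"
  obtains l where "0 < l" "\<And>f. pdiv p f H = hplus f l - hminus f l"
proof -
  define l where "l = (SOME l. 0 < l \<and> H = (\<lambda>y. l * y) ` Hp p)"
  have "\<exists>l. 0 < l \<and> H = (\<lambda>y. l * y) ` Hp p"
    using assms unfolding Cp_def by blast
  then have "0 < l"
    unfolding l_def by (rule someI2_ex) blast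
  moreover have "pdiv p f H = hplus f l - hminus f l" for f
    using assms unfolding pdiv_def l_def[symmetric] by simp
  ultimately show ?thesis
    using that by blast
qed

lemma pdiv_max_ge:
  assumes f: "K_real p f" and g: "K_real p g" and H: "H \<in> Cp p"
  shows "min (pdiv p f H) (pdiv p g H) \<le> pdiv p (\<lambda>x. max (f x) (g x)) H"
proof -
  obtain l where l: "0 < l" "\<And>f. pdiv p f H = hplus f l - hminus f l"
    using pdiv_representative[OF H] by blast
  have touching: "pdiv p f\<^sub>1 H \<le> pdiv p (\<lambda>x. max (f\<^sub>1 x) (f\<^sub>2 x)) H"
    if f\<^sub>1: "K_real p f\<^sub>1" and f\<^sub>2: "K_real p f\<^sub>2" and le: "f\<^sub>2 l \<le> f\<^sub>1 l" for f\<^sub>1 f\<^sub>2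
  proof -
    let ?m = "\<lambda>x. max (f\<^sub>1 x) (f\<^sub>2 x)"
    obtain a b where a: "affine_germ f\<^sub>1 l a (at_right l)" "affine_germ f\<^sub>1 l b (at_left l)"
      using K_real_germs[OF f\<^sub>1 l(1)] by metis
    obtain a' b' where a': "affine_germ ?m l a' (at_right l)" "affine_germ ?m l b' (at_left l)"
      using K_real_germs[OF K_real_max[OF f\<^sub>1 f\<^sub>2] l(1)] by metis
    have "a \<le> a'" "b' \<le> b"
      using affine_germ_at_right_mono[OF a(1) a'(1)] affine_germ_at_left_mono[OF a(2) a'(2)] le
      by simp_all
    then have "l * a - l * b \<le> l * a' - l * b'"
      using l(1) mult_left_mono[of a a' l] mult_left_mono[of b' b l] by linarith
    then show ?thesis
      using l(2) hplus_affine_germ[OF l(1)] hminus_affine_germ[OF l(1)] a a' by simp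
  qed
  show ?thesis
  proof (cases "g l \<le> f l")
    case True
    then show ?thesis
      using touching[OF f g] by simp
  next
    case False
    then have "pdiv p g H \<le> pdiv p (\<lambda>x. max (g x) (f x)) H"
      using touching[OF g f] by simp
    then show ?thesis
      by (simp add: max.commute)
  qed
qed

lemma pdiv_add_const: "pdiv p (\<lambda>x. f x + c) H = pdiv p f H"
  by (simp add: pdiv_def hplus_def hminus_def)

lemma H0rho_Some_iff:
  "Some f \<in> H0rho p D \<rho> \<longleftrightarrow> K_real p f \<and> (\<forall>H\<in>Cp p. 0 \<le> D H + pdiv p f H) \<and> pnorm p f \<le> \<rho>"
  by (auto simp: H0rho_def H0_def)

lemma None_in_H0rho: "None \<in> H0rho p D \<rho>"
  by (simp add: H0rho_def H0_def)

lemma H0rho_Ksup_closed: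
  assumes p: "prime p" and "x \<in> H0rho p D \<rho>" "y \<in> H0rho p D \<rho>"
  shows "Ksup x y \<in> H0rho p D \<rho>"
proof (cases x; cases y)
  fix f g assume x: "x = Some f" and y: "y = Some g"
  have f: "K_real p f" "\<forall>H\<in>Cp p. 0 \<le> D H + pdiv p f H" "pnorm p f \<le> \<rho>"
    using assms(2) x H0rho_Some_iff by blast+
  have g: "K_real p g" "\<forall>H\<in>Cp p. 0 \<le> D H + pdiv p g H" "pnorm p g \<le> \<rho>"
    using assms(3) y H0rho_Some_iff by blast+
  have "0 \<le> D H + pdiv p (\<lambda>x. max (f x) (g x)) H" if "H \<in> Cp p" for H
    using pdiv_max_ge[OF f(1) g(1) that] f(2) g(2) that by fastforce
  moreover have "pnorm p (\<lambda>x. max (f x) (g x)) \<le> \<rho>"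
    using pnorm_max_le[OF p f(1) g(1)] f(3) g(3) by linarith
  ultimately show ?thesis
    using x y K_real_max[OF f(1) g(1)] H0rho_Some_iff by simp
qed (use assms in auto)

lemma H0rho_Ksmult_closed:
  assumes "x \<in> H0rho p D \<rho>"
  shows "Ksmult c x \<in> H0rho p D \<rho>"
proof (cases c; cases x)
  fix c' f assume c: "c = Some c'" and x: "x = Some f"
  then show ?thesis
    using assms K_real_add_const H0rho_Some_iff pdiv_add_const pnorm_add_const by simp
qed (simp_all add: None_in_H0rho)

lemma H0rho_Rmax_submodule: "prime p \<Longrightarrow> Rmax_submodule (H0rho p D \<rho>)"
  unfolding Rmax_submodule_def
  using None_in_H0rho H0rho_Ksup_closed H0rho_Ksmult_closed by blast

lemma H0rho_subset: "H0rho p D \<rho> \<subseteq> H0 p D"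
  by (auto simp: H0rho_def)

lemma H0rho_mono: "\<rho> \<le> \<rho>' \<Longrightarrow> H0rho p D \<rho> \<subseteq> H0rho p D \<rho>'"
  by (auto simp: H0rho_def split: option.splits)

lemma UN_H0rho: "(\<Union>\<rho>\<in>{0<..}. H0rho p D \<rho>) = H0 p D"
proof
  show "(\<Union>\<rho>\<in>{0<..}. H0rho p D \<rho>) \<subseteq> H0 p D"
    using H0rho_subset by blast
  show "H0 p D \<subseteq> (\<Union>\<rho>\<in>{0<..}. H0rho p D \<rho>)"
  proof
    fix x assume x: "x \<in> H0 p D"
    have "x \<in> H0rho p D (case x of None \<Rightarrow> 1 | Some f \<Rightarrow> max 1 (pnorm p f))"
      using x by (auto simp: H0rho_def split: option.splits)
    moreover have "(case x of None \<Rightarrow> 1 | Some f \<Rightarrow> max 1 (pnorm p f)) \<in> {0<..}"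
      by (simp add: less_max_iff_disj split: option.splits)
    ultimately show "x \<in> (\<Union>\<rho>\<in>{0<..}. H0rho p D \<rho>)"
      by blast
  qed
qed

theorem proposition5p15:
  fixes p :: nat and f g :: "real \<Rightarrow> real"
  assumes "prime p" and "K_real p f" and "K_real p g"
  shows "pnorm p (\<lambda>x. max (f x) (g x)) \<le> max (pnorm p f) (pnorm p g)
    \<and> pnorm p (\<lambda>x. f x + g x) \<le> max (pnorm p f) (pnorm p g)
    \<and> (\<forall>a::int. pnorm p (\<lambda>x. real p powi a * f x) = real p powi (- a) * pnorm p f)
    \<and> (pnorm p f \<le> 1 \<longleftrightarrow>
         (\<forall>x\<in>{1..<real p}. right_slopes f x \<subseteq> \<int>) \<and>
         (\<forall>x\<in>{1<..real p}. left_slopes f x \<subseteq> \<int>))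
    \<and> (\<forall>D\<in>Div p.
         (\<forall>\<rho>>0. H0rho p D \<rho> \<subseteq> H0 p D \<and> Rmax_submodule (H0rho p D \<rho>))
       \<and> (\<forall>\<rho> \<rho>'. 0 < \<rho> \<longrightarrow> \<rho> \<le> \<rho>' \<longrightarrow> H0rho p D \<rho> \<subseteq> H0rho p D \<rho>')
       \<and> (\<Union>\<rho>\<in>{0<..}. H0rho p D \<rho>) = H0 p D)"
  using pnorm_max_le[OF assms] pnorm_add_le[OF assms] pnorm_power_int_mult[OF assms(1,2)]
    pnorm_le_1_iff[OF assms(1,2)] H0rho_Rmax_submodule[OF assms(1)] H0rho_subset H0rho_mono UN_H0rho
  by auto

end
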